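(* Let $A\in\mathbb{R}^{n\times n}$ be symmetric positive semi-definite and let $Q\in\mathbb{R}^{n\times k}$ have orthonormal columns ($Q^\top Q=I_k$, $k\le n$). Then for every $i=1,\ldots,k$, \[ \lambda_i(A)\;\ge\;\lambda_i\bigl(AQ(Q^\top AQ)^{\dagger}(AQ)^\top\bigr)\;\ge\;\sigma_i(AQ)\;\ge\;\lambda_i(Q^\top AQ). \]
   Context: For a symmetric matrix $B$, $\lambda_1(B)\ge\lambda_2(B)\ge\cdots$ denote its eigenvalues in non-increasing order; for any matrix $B$, $\sigma_1(B)\ge\sigma_2(B)\ge\cdots\ge0$ denote its singular values in non-increasing order. $B^{\dagger}$ is the Moore–Penrose pseudoinverse. The matrix $A\langle Q\rangle:=AQ(Q^\top AQ)^{\dagger}(AQ)^\top$ is the Nyström approximation of $A$ with respect to $Q$; the three quantities $\lambda_i(A\langle Q\rangle)$, $\sigma_i(AQ)$, $\lambda_i(Q^\top AQ)$ are the eigenvalue estimates produced by the Nyström, SVD-extract, and Rayleigh–Ritz methods respectively. In the paper $\operatorname{span}(Q)$ is intended to approximate the span of the eigenvectors of $A$ for its $k$ largest eigenvalues, but no quantitative condition on this is imposed. *)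

theory Defs
  imports "Jordan_Normal_Form.Char_Poly"
begin

(* For real symmetric matrices such a
   list exists (the characteristic polynomial splits over the reals). *)
definition eig_list :: "real mat \<Rightarrow> real list" where
  "eig_list B = (THE xs. sorted_wrt (\<ge>) xs \<and>
       char_poly B = (\<Prod>a\<leftarrow>xs. [:- a, 1:]))"

(* lambda_i(B), 1-based: lambda_1 >= lambda_2 >= ... *)
definition eigval :: "real mat \<Rightarrow> nat \<Rightarrow> real" where
  "eigval B i = eig_list B ! (i - 1)"

definition singval :: "real mat \<Rightarrow> nat \<Rightarrow> real" where
  "singval B i = sqrt (eigval (B\<^sup>T * B) i)"

definition pinv :: "real mat \<Rightarrow> real mat" where
  "pinv M = (THE X. X \<in> carrier_mat (dim_col M) (dim_row M) \<and>
       M * X * M = M \<and> X * M * X = X \<and>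
       (M * X)\<^sup>T = M * X \<and> (X * M)\<^sup>T = X * M)"

definition nystrom :: "real mat \<Rightarrow> real mat \<Rightarrow> real mat" where
  "nystrom A Q = (A * Q) * pinv (Q\<^sup>T * A * Q) * (A * Q)\<^sup>T"

end

(* The eigenvalues of a real symmetric matrix are read off a sorted orthogonal
   diagonalisation A = U diag(d) U^T, built by repeatedly deflating the largest eigenvalue.
   This yields the Courant-Fischer comparison: if x^T B x <= (Qx)^T M (Qx) for all x and an
   isometry Q, then lambda_i(B) <= lambda_i(M).

   For the Nystrom approximation N = AQ (Q^T A Q)^+ (AQ)^T, positive semidefiniteness of A
   gives y^T N y <= y^T A y and N Q = A Q. The first inequality gives lambda_i(N) <= lambda_i(A).
   The identity gives Q^T N^2 Q = (AQ)^T (AQ), hence sigma_i(AQ)^2 <= lambda_i(N^2) = lambda_i(N)^2.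
   Finally (Q^T A Q)^2 = (AQ)^T Q Q^T (AQ) is dominated by (AQ)^T (AQ), as Q Q^T is an
   orthogonal projection, so lambda_i(Q^T A Q)^2 <= sigma_i(AQ)^2. *)

theory Submission
  imports Defs "Jordan_Normal_Form.Schur_Decomposition"
begin

lemma orthogonal_mat_mult_transpose:
  fixes U :: "'a :: field mat"
  assumes "U \<in> carrier_mat n n" and "U\<^sup>T * U = 1\<^sub>m n"
  shows "U * U\<^sup>T = 1\<^sub>m n"
  using mat_mult_left_right_inverse[of "U\<^sup>T" n U] assms by auto

lemma mat_diag_mult_vec:
  assumes "z \<in> carrier_vec n"
  shows "mat_diag n f *\<^sub>v z = vec n (\<lambda>j. f j * z $ j)"
proof (rule eq_vecI)
  fix j assume "j < dim_vec (vec n (\<lambda>j. f j * z $ j))"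
  then have j: "j < n" by simp
  have "(mat_diag n f *\<^sub>v z) $ j = (\<Sum>l\<in>{0..<n}. (if j = l then f l else 0) * z $ l)"
    using assms j by (simp add: mat_diag_def scalar_prod_def)
  also have "\<dots> = f j * z $ j"
    using j by (simp add: if_distrib[of "\<lambda>x. x * _"] cong: if_cong)
  finally show "(mat_diag n f *\<^sub>v z) $ j = vec n (\<lambda>j. f j * z $ j) $ j" using j by simp
qed (simp add: mat_diag_def)

lemma transpose_mult3:
  fixes A B C :: "'a :: comm_semiring_0 mat"
  assumes "A \<in> carrier_mat n1 n2" "B \<in> carrier_mat n2 n3" "C \<in> carrier_mat n3 n4"
  shows "(A * B * C)\<^sup>T = C\<^sup>T * B\<^sup>T * A\<^sup>T"
proof -
  have "(A * B * C)\<^sup>T = C\<^sup>T * (A * B)\<^sup>T"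
    using assms by (intro transpose_mult[of _ n1 n3]) auto
  also have "(A * B)\<^sup>T = B\<^sup>T * A\<^sup>T"
    using assms by (intro transpose_mult)
  finally show ?thesis using assms by simp
qed

lemma symmetric_congruence:
  fixes B W :: "'a :: comm_semiring_0 mat"
  assumes B: "B \<in> carrier_mat m m" "B\<^sup>T = B" and W: "W \<in> carrier_mat m n"
  shows "(W\<^sup>T * B * W)\<^sup>T = W\<^sup>T * B * W"
  using transpose_mult3[of "W\<^sup>T" n m B m W n] assms by simp

lemma orthogonal_conj_mult:
  fixes U :: "'a :: comm_ring_1 mat"
  assumes U: "U \<in> carrier_mat n n" "U\<^sup>T * U = 1\<^sub>m n"
    and D: "D1 \<in> carrier_mat n n" "D2 \<in> carrier_mat n n"
  shows "(U * D1 * U\<^sup>T) * (U * D2 * U\<^sup>T) = U * (D1 * D2) * U\<^sup>T"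
proof -
  have "(U * D1 * U\<^sup>T) * (U * D2 * U\<^sup>T) = U * (D1 * (U\<^sup>T * U) * D2) * U\<^sup>T"
    using U(1) D by (simp add: assoc_mult_mat[of _ n n _ n _ n])
  then show ?thesis using U D by simp
qed

lemma orthogonal_diag_symmetric:
  fixes U :: "'a :: comm_semiring_0 mat"
  assumes "U \<in> carrier_mat n n"
  shows "(U * mat_diag n f * U\<^sup>T)\<^sup>T = U * mat_diag n f * U\<^sup>T"
proof -
  have "(mat_diag n f)\<^sup>T = mat_diag n f"
    by (auto simp: mat_diag_def)
  then show ?thesis
    using symmetric_congruence[of "mat_diag n f" n "U\<^sup>T" n] assms by simp
qed

lemma gram_symmetric:
  fixes C :: "'a :: comm_semiring_0 mat"
  assumes "C \<in> carrier_mat n k"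
  shows "(C\<^sup>T * C)\<^sup>T = C\<^sup>T * C"
  using transpose_mult[of "C\<^sup>T" k n C k] assms by simp

lemma assoc_mult3_mat_vec:
  assumes "A \<in> carrier_mat n1 n2" "B \<in> carrier_mat n2 n3" "D \<in> carrier_mat n3 n4"
    and "v \<in> carrier_vec n4"
  shows "(A * B * D) *\<^sub>v v = A *\<^sub>v (B *\<^sub>v (D *\<^sub>v v))"
  using assms assoc_mult_mat_vec[of "A * B" n1 n3 D n4 v] assoc_mult_mat_vec[of A n1 n2 B n3] by simp

lemma minus_vec_eq_zeroD:
  fixes a b :: "'a :: group_add vec"
  assumes "a \<in> carrier_vec n" "b \<in> carrier_vec n" and "a - b = 0\<^sub>v n"
  shows "a = b"
  using assms by (metis carrier_vecD eq_vecI index_minus_vec(1) index_zero_vec(1) right_minus_eq)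

lemma symmetric_bilinear_form_commute:
  fixes A :: "'a :: comm_semiring_0 mat"
  assumes A: "A \<in> carrier_mat n n" "A\<^sup>T = A" and x: "x \<in> carrier_vec n" and y: "y \<in> carrier_vec n"
  shows "x \<bullet> (A *\<^sub>v y) = y \<bullet> (A *\<^sub>v x)"
proof -
  have "x \<bullet> (A *\<^sub>v y) = (A\<^sup>T *\<^sub>v x) \<bullet> y"
    using transpose_vec_mult_scalar[OF A(1) y x] by simp
  also have "\<dots> = y \<bullet> (A *\<^sub>v x)"
    using A x y by (subst comm_scalar_prod[of _ n]) auto
  finally show ?thesis .
qed

lemma transpose_mult_vec_scalar:
  fixes C :: "'a :: comm_semiring_0 mat"
  assumes C: "C \<in> carrier_mat n k" and x: "x \<in> carrier_vec k" and y: "y \<in> carrier_vec n"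
  shows "x \<bullet> (C\<^sup>T *\<^sub>v y) = (C *\<^sub>v x) \<bullet> y"
  using transpose_vec_mult_scalar[OF C x y] comm_scalar_prod[of x k "C\<^sup>T *\<^sub>v y"]
    comm_scalar_prod[of y n "C *\<^sub>v x"] C x y by simp

lemma gram_quadratic_form:
  fixes C :: "'a :: comm_semiring_0 mat"
  assumes C: "C \<in> carrier_mat n k" and x: "x \<in> carrier_vec k"
  shows "x \<bullet> ((C\<^sup>T * C) *\<^sub>v x) = (C *\<^sub>v x) \<bullet> (C *\<^sub>v x)"
  using transpose_mult_vec_scalar[OF C x, of "C *\<^sub>v x"] C x by simp

lemma isometry_scalar_prod:
  fixes X :: "'a :: comm_ring_1 mat"
  assumes X: "X \<in> carrier_mat n i" "X\<^sup>T * X = 1\<^sub>m i" and c: "c \<in> carrier_vec i"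
  shows "(X *\<^sub>v c) \<bullet> (X *\<^sub>v c) = c \<bullet> c"
proof -
  have "(X *\<^sub>v c) \<bullet> (X *\<^sub>v c) = (X\<^sup>T *\<^sub>v (X *\<^sub>v c)) \<bullet> c"
    using X c by (intro transpose_vec_mult_scalar[symmetric]) auto
  also have "X\<^sup>T *\<^sub>v (X *\<^sub>v c) = c"
    using X c by (simp flip: assoc_mult_mat_vec[of _ i n _ i])
  finally show ?thesis .
qed

lemma isometry_mult:
  fixes Q X :: "'a :: comm_semiring_1 mat"
  assumes Q: "Q \<in> carrier_mat n k" "Q\<^sup>T * Q = 1\<^sub>m k" and X: "X \<in> carrier_mat k i" "X\<^sup>T * X = 1\<^sub>m i"
  shows "(Q * X)\<^sup>T * (Q * X) = 1\<^sub>m i"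
proof -
  have "(Q * X)\<^sup>T * (Q * X) = X\<^sup>T * (Q\<^sup>T * (Q * X))"
    using Q X by (simp add: transpose_mult[of _ n k] assoc_mult_mat[of _ i k _ n _ i])
  also have "Q\<^sup>T * (Q * X) = X"
    using Q X by (simp flip: assoc_mult_mat[of _ k n _ k _ i])
  finally show ?thesis using X by simp
qed

lemma isometry_transpose_norm_le:
  fixes Q :: "real mat"
  assumes Q: "Q \<in> carrier_mat n k" "Q\<^sup>T * Q = 1\<^sub>m k" and y: "y \<in> carrier_vec n"
  shows "(Q\<^sup>T *\<^sub>v y) \<bullet> (Q\<^sup>T *\<^sub>v y) \<le> y \<bullet> y"
proof -
  define w where "w = Q\<^sup>T *\<^sub>v y"
  have w: "w \<in> carrier_vec k" and Qw: "Q *\<^sub>v w \<in> carrier_vec n" unfolding w_def using Q y by auto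
  have yQw: "y \<bullet> (Q *\<^sub>v w) = w \<bullet> w" and Qwy: "(Q *\<^sub>v w) \<bullet> y = w \<bullet> w"
    using transpose_vec_mult_scalar[OF Q(1) w y] comm_scalar_prod[OF y Qw] unfolding w_def by simp_all
  have "0 \<le> (y - Q *\<^sub>v w) \<bullet> (y - Q *\<^sub>v w)"
    using conjugate_square_ge_0_vec[of "y - Q *\<^sub>v w"] by simp
  also have "\<dots> = y \<bullet> y - y \<bullet> (Q *\<^sub>v w) - ((Q *\<^sub>v w) \<bullet> y - (Q *\<^sub>v w) \<bullet> (Q *\<^sub>v w))"
    using y Qw by (simp add: minus_scalar_prod_distrib[of _ n] scalar_prod_minus_distrib[of _ n])
  also have "\<dots> = y \<bullet> y - w \<bullet> w"
    unfolding yQw Qwy isometry_scalar_prod[OF Q w] by simp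
  finally show ?thesis unfolding w_def by simp
qed

section \<open>Orthogonal diagonalisation of symmetric matrices\<close>

lemma proots_linear_factors:
  fixes xs :: "'a :: idom list"
  shows "proots (\<Prod>a\<leftarrow>xs. [:- a, 1:]) = mset xs"
proof (induction xs)
  case (Cons a xs)
  have "(\<Prod>b\<leftarrow>xs. [:- b, 1:]) \<noteq> 0"
    by (auto simp: prod_list_zero_iff)
  with Cons.IH show ?case
    by (simp add: proots_mult del: mult_pCons_left)
qed simp

lemma sorted_desc_mset_eqI:
  fixes xs ys :: "'a :: linorder list"
  assumes "mset xs = mset ys" and "sorted_wrt (\<ge>) xs" and "sorted_wrt (\<ge>) ys"
  shows "xs = ys"
proof -
  have "rev xs = sort (rev xs)" "rev ys = sort (rev ys)"
    using assms(2,3) by (simp_all add: sorted_wrt_rev sorted_sort_id)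
  moreover have "sort (rev xs) = sort (rev ys)"
    by (metis assms(1) mset_rev sorted_list_of_multiset_mset)
  ultimately show ?thesis by simp
qed

lemma eig_list_eqI:
  assumes "sorted_wrt (\<ge>) ds" and "char_poly A = (\<Prod>a\<leftarrow>ds. [:- a, 1:])"
  shows "eig_list A = ds"
  unfolding eig_list_def
proof (rule the_equality)
  fix xs assume "sorted_wrt (\<ge>) xs \<and> char_poly A = (\<Prod>a\<leftarrow>xs. [:- a, 1:])"
  then show "xs = ds"
    using assms sorted_desc_mset_eqI proots_linear_factors by metis
qed (use assms in simp)

lemma char_poly_orthogonal_diag:
  fixes A U :: "real mat"
  assumes U: "U \<in> carrier_mat n n" "U\<^sup>T * U = 1\<^sub>m n" and ds: "length ds = n"
    and A: "A = U * mat_diag n ((!) ds) * U\<^sup>T"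
  shows "char_poly A = (\<Prod>a\<leftarrow>ds. [:- a, 1:])"
proof -
  have "similar_mat A (mat_diag n ((!) ds))"
    unfolding similar_mat_def similar_mat_wit_def Let_def
    using U orthogonal_mat_mult_transpose[OF U] A by (intro exI[of _ U] exI[of _ "U\<^sup>T"]) auto
  then have "char_poly A = char_poly (mat_diag n ((!) ds))"
    by (rule char_poly_similar)
  also have "\<dots> = (\<Prod>a\<leftarrow>diag_mat (mat_diag n ((!) ds)). [:- a, 1:])"
    by (rule char_poly_upper_triangular[of _ n]) (auto simp: upper_triangular_def mat_diag_def)
  also have "diag_mat (mat_diag n ((!) ds)) = ds"
    using ds by (intro nth_equalityI) (auto simp: diag_mat_def mat_diag_def)
  finally show ?thesis .
qed

text \<open>For an eigenvector v: z (v \<bullet>c v) = (A v) \<bullet>c v = v \<bullet>c (A v) = cnj z (v \<bullet>c v).\<close>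
lemma eigenvalue_of_real_symmetric_is_real:
  fixes A :: "real mat"
  assumes A: "A \<in> carrier_mat n n" and sym: "A\<^sup>T = A"
    and z: "eigenvalue (map_mat complex_of_real A) z"
  shows "z \<in> \<real>"
proof -
  define Ac where "Ac = map_mat complex_of_real A"
  have Ac: "Ac \<in> carrier_mat n n" "Ac\<^sup>T = Ac"
    using A sym unfolding Ac_def by (auto, metis map_mat_transpose)
  obtain v where v: "v \<in> carrier_vec n" "v \<noteq> 0\<^sub>v n" and ev: "Ac *\<^sub>v v = z \<cdot>\<^sub>v v"
    using z Ac unfolding Ac_def[symmetric] eigenvalue_def eigenvector_def by auto
  have conj_Ac: "conjugate (Ac *\<^sub>v v) = Ac *\<^sub>v conjugate v"
    using Ac v A by (intro eq_vecI) (auto simp: Ac_def scalar_prod_def)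
  have "z * (v \<bullet>c v) = (Ac *\<^sub>v v) \<bullet>c v"
    unfolding ev using v by simp
  also have "\<dots> = (Ac\<^sup>T *\<^sub>v v) \<bullet> conjugate v"
    using Ac by simp
  also have "\<dots> = v \<bullet> (Ac *\<^sub>v conjugate v)"
    using Ac v by (intro transpose_vec_mult_scalar) auto
  also have "\<dots> = v \<bullet>c (Ac *\<^sub>v v)"
    using conj_Ac by simp
  also have "\<dots> = cnj z * (v \<bullet>c v)"
    unfolding ev conjugate_smult_vec using v by simp
  finally show ?thesis
    using v Reals_cnj_iff by simp
qed

lemma symmetric_mat_has_eigenvalue:
  fixes A :: "real mat"
  assumes A: "A \<in> carrier_mat n n" and sym: "A\<^sup>T = A" and n: "n > 0"
  shows "\<exists>e. eigenvalue A e"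
proof -
  define Ac where "Ac = map_mat complex_of_real A"
  have Ac: "Ac \<in> carrier_mat n n" using A by (simp add: Ac_def)
  obtain as where cp: "char_poly Ac = (\<Prod>a\<leftarrow>as. [:- a, 1:])" and len: "length as = n"
    using char_poly_factorized[OF Ac] by blast
  have "as ! 0 \<in> set as" using len n by auto
  then have root: "poly (char_poly Ac) (as ! 0) = 0"
    unfolding cp by (induct as) auto
  then have "as ! 0 \<in> \<real>"
    using eigenvalue_of_real_symmetric_is_real[OF A sym] eigenvalue_root_char_poly[OF Ac]
    unfolding Ac_def by blast
  then obtain r where r: "as ! 0 = complex_of_real r"
    by (auto elim: Reals_cases)
  have "complex_of_real (poly (char_poly A) r) = poly (char_poly Ac) (as ! 0)"
    unfolding r Ac_def of_real_hom.char_poly_hom[OF A] by simp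
  then have "poly (char_poly A) r = 0"
    using root by simp
  then show ?thesis
    using eigenvalue_root_char_poly[OF A] by blast
qed

definition normalize_vec :: "real vec \<Rightarrow> real vec" where
  "normalize_vec w = (1 / sqrt (w \<bullet> w)) \<cdot>\<^sub>v w"

lemma orthonormal_mat_of_corthogonal_cols:
  assumes ws: "set ws \<subseteq> carrier_vec n" "corthogonal ws" "length ws = n"
  defines "W \<equiv> mat_of_cols n (map normalize_vec ws)"
  shows "W\<^sup>T * W = 1\<^sub>m n"
proof (rule eq_matI)
  have ws_carrier: "\<And>i. i < n \<Longrightarrow> ws ! i \<in> carrier_vec n" using ws by auto
  have orth: "\<And>i j. i < n \<Longrightarrow> j < n \<Longrightarrow> (ws ! i \<bullet> ws ! j = 0) = (i \<noteq> j)"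
    using ws(2,3) unfolding corthogonal_def by simp
  fix i j assume "i < dim_row (1\<^sub>m n)" and "j < dim_col (1\<^sub>m n)"
  then have i: "i < n" and j: "j < n" by auto
  have "(W\<^sup>T * W) $$ (i, j) = normalize_vec (ws ! i) \<bullet> normalize_vec (ws ! j)"
    using i j ws ws_carrier unfolding W_def normalize_vec_def by (simp add: col_mat_of_cols)
  also have "\<dots> = (ws ! i \<bullet> ws ! j) / (sqrt (ws ! i \<bullet> ws ! i) * sqrt (ws ! j \<bullet> ws ! j))"
    unfolding normalize_vec_def using ws_carrier[OF i] ws_carrier[OF j] by simp
  also have "\<dots> = 1\<^sub>m n $$ (i, j)"
  proof (cases "i = j")
    case True
    have "ws ! i \<bullet> ws ! i \<ge> 0"
      using conjugate_square_ge_0_vec[of "ws ! i"] by simp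
    with True orth[OF i i] i show ?thesis by simp
  qed (use orth[OF i j] i j in simp)
  finally show "(W\<^sup>T * W) $$ (i, j) = 1\<^sub>m n $$ (i, j)" .
qed (use ws in \<open>auto simp: W_def\<close>)

lemma orthonormal_completion:
  fixes v :: "real vec"
  assumes v: "v \<in> carrier_vec n" and v0: "v \<noteq> 0\<^sub>v n"
  obtains W where "W \<in> carrier_mat n n" and "W\<^sup>T * W = 1\<^sub>m n" and "col W 0 = normalize_vec v"
proof -
  have n: "n > 0" using v0 v by (cases n) auto
  interpret cof_vec_space n "TYPE(real)" .
  define b where "b = basis_completion v"
  define ws where "ws = gram_schmidt n b"
  from basis_completion[OF v v0, folded b_def]
  have dist_b: "distinct b" and indep: "\<not> lin_dep (set b)" and b: "set b \<subseteq> carrier_vec n"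
    and hdb: "hd b = v" and len_b: "length b = n" by auto
  from hdb len_b n obtain vs where bv: "b = v # vs" by (cases b) auto
  from gram_schmidt_result[OF b dist_b indep refl, folded ws_def]
  have ws: "set ws \<subseteq> carrier_vec n" "corthogonal ws" "length ws = n"
    by (auto simp: len_b)
  have "ws ! 0 = v"
    using gram_schmidt_hd[OF v, of vs, folded bv ws_def] ws(3) n
    by (metis hd_conv_nth length_0_conv neq0_conv)
  then have "col (mat_of_cols n (map normalize_vec ws)) 0 = normalize_vec v"
    using ws n v by (simp add: col_mat_of_cols normalize_vec_def)
  moreover have "mat_of_cols n (map normalize_vec ws) \<in> carrier_mat n n"
    using mat_of_cols_carrier(1)[of n "map normalize_vec ws"] ws(3) by simp
  ultimately show ?thesis
    using that orthonormal_mat_of_corthogonal_cols[OF ws] by blast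
qed

lemma eigenvector_orthonormal_completion:
  fixes A :: "real mat"
  assumes A: "A \<in> carrier_mat n n" and e: "eigenvalue A e"
  obtains W where "W \<in> carrier_mat n n" and "W\<^sup>T * W = 1\<^sub>m n"
    and "A *\<^sub>v col W 0 = e \<cdot>\<^sub>v col W 0"
proof -
  obtain v where v: "v \<in> carrier_vec n" "v \<noteq> 0\<^sub>v n" and ev: "A *\<^sub>v v = e \<cdot>\<^sub>v v"
    using A e unfolding eigenvalue_def eigenvector_def by auto
  obtain W where W: "W \<in> carrier_mat n n" "W\<^sup>T * W = 1\<^sub>m n" and W0: "col W 0 = normalize_vec v"
    using orthonormal_completion[OF v] .
  have "A *\<^sub>v col W 0 = e \<cdot>\<^sub>v col W 0"
    unfolding W0 normalize_vec_def using A v ev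
    by (simp add: mult_mat_vec smult_smult_assoc mult.commute)
  with W that show ?thesis by blast
qed

lemma orthogonal_deflation:
  fixes A W :: "real mat"
  assumes A: "A \<in> carrier_mat (Suc m) (Suc m)" "A\<^sup>T = A"
    and W: "W \<in> carrier_mat (Suc m) (Suc m)" "W\<^sup>T * W = 1\<^sub>m (Suc m)"
    and eigen: "A *\<^sub>v col W 0 = e \<cdot>\<^sub>v col W 0"
  obtains A1 where "A1 \<in> carrier_mat m m" and "A1\<^sup>T = A1"
    and "W\<^sup>T * A * W = four_block_mat (mat 1 1 (\<lambda>_. e)) (0\<^sub>m 1 m) (0\<^sub>m m 1) A1"
proof -
  define A' where "A' = W\<^sup>T * A * W"
  have A': "A' \<in> carrier_mat (Suc m) (Suc m)" unfolding A'_def using W A by simp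
  have A'_sym: "A'\<^sup>T = A'" unfolding A'_def by (rule symmetric_congruence[OF A W(1)])
  have A'_entry_sym: "A' $$ (j, i) = A' $$ (i, j)" if "i < Suc m" "j < Suc m" for i j
    using that A' arg_cong[OF A'_sym, of "\<lambda>M. M $$ (i, j)"] by simp
  have col0: "A' $$ (i, 0) = (if i = 0 then e else 0)" if i: "i < Suc m" for i
  proof -
    have "A' $$ (i, 0) = (W\<^sup>T * (A * W)) $$ (i, 0)"
      unfolding A'_def using W A by (simp add: assoc_mult_mat[of _ "Suc m" "Suc m" _ "Suc m" _ "Suc m"])
    also have "\<dots> = row W\<^sup>T i \<bullet> col (A * W) 0"
      using i W A by (intro index_mult_mat) auto
    also have "row W\<^sup>T i = col W i"
      using i W by simp
    also have "col (A * W) 0 = e \<cdot>\<^sub>v col W 0"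
      using col_mult2[OF A(1) W(1), of 0] eigen by simp
    also have "col W i \<bullet> (e \<cdot>\<^sub>v col W 0) = e * (col W i \<bullet> col W 0)"
      using i W by simp
    also have "col W i \<bullet> col W 0 = 1\<^sub>m (Suc m) $$ (i, 0)"
      using i W by (simp flip: W(2))
    finally show ?thesis using i by simp
  qed
  have row0: "A' $$ (0, j) = (if j = 0 then e else 0)" if j: "j < Suc m" for j
    using col0[OF j] A'_entry_sym[OF j] by simp
  define A1 where "A1 = mat m m (\<lambda>(i, j). A' $$ (Suc i, Suc j))"
  have "A1\<^sup>T = A1"
    using A'_entry_sym by (intro eq_matI) (auto simp: A1_def)
  moreover have "A' = four_block_mat (mat 1 1 (\<lambda>_. e)) (0\<^sub>m 1 m) (0\<^sub>m m 1) A1"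
  proof (rule eq_matI)
    fix i j assume "i < dim_row (four_block_mat (mat 1 1 (\<lambda>_. e)) (0\<^sub>m 1 m) (0\<^sub>m m 1) A1)"
      and "j < dim_col (four_block_mat (mat 1 1 (\<lambda>_. e)) (0\<^sub>m 1 m) (0\<^sub>m m 1) A1)"
    then have i: "i < Suc m" and j: "j < Suc m" by (auto simp: A1_def)
    show "A' $$ (i, j) = four_block_mat (mat 1 1 (\<lambda>_. e)) (0\<^sub>m 1 m) (0\<^sub>m m 1) A1 $$ (i, j)"
      using row0[OF j] col0[OF i] i j by (cases i; cases j) (auto simp: A1_def)
  qed (use A' in \<open>auto simp: A1_def\<close>)
  moreover have "A1 \<in> carrier_mat m m" unfolding A1_def by simp
  ultimately show ?thesis
    using that unfolding A'_def by blast
qed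

definition spectral_decomp :: "nat \<Rightarrow> real mat \<Rightarrow> real mat \<Rightarrow> real list \<Rightarrow> bool" where
  "spectral_decomp n A U ds \<longleftrightarrow> U \<in> carrier_mat n n \<and> U\<^sup>T * U = 1\<^sub>m n \<and> length ds = n \<and>
     sorted_wrt (\<ge>) ds \<and> A = U * mat_diag n ((!) ds) * U\<^sup>T"

lemma eig_list_spectral_decomp:
  assumes "spectral_decomp n A U ds"
  shows "eig_list A = ds"
  using assms char_poly_orthogonal_diag eig_list_eqI unfolding spectral_decomp_def by metis

lemma eigval_spectral_decomp:
  assumes "spectral_decomp n A U ds"
  shows "eigval A i = ds ! (i - 1)"
  using eig_list_spectral_decomp[OF assms] by (simp add: eigval_def)

lemma mat_diag_Cons:
  "mat_diag (Suc m) ((!) (e # ds)) =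
     four_block_mat (mat 1 1 (\<lambda>_. e)) (0\<^sub>m 1 m) (0\<^sub>m m 1) (mat_diag m ((!) ds))"
  by (rule eq_matI) (auto simp: mat_diag_def nth_Cons')

lemma finite_eigenvalues:
  fixes A :: "'a :: field mat"
  assumes "A \<in> carrier_mat n n"
  shows "finite {e. eigenvalue A e}"
proof -
  have "char_poly A \<noteq> 0"
    using degree_monic_char_poly[OF assms] by auto
  then show ?thesis
    using poly_roots_finite eigenvalue_root_char_poly[OF assms] by simp
qed

lemma orthogonal_block_lift:
  fixes A W U1 :: "real mat"
  assumes A: "A \<in> carrier_mat (Suc m) (Suc m)"
    and W: "W \<in> carrier_mat (Suc m) (Suc m)" "W\<^sup>T * W = 1\<^sub>m (Suc m)"
    and U1: "U1 \<in> carrier_mat m m" "U1\<^sup>T * U1 = 1\<^sub>m m"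
    and A_block: "W\<^sup>T * A * W =
      four_block_mat (mat 1 1 (\<lambda>_. e)) (0\<^sub>m 1 m) (0\<^sub>m m 1) (U1 * mat_diag m ((!) ds) * U1\<^sup>T)"
  defines "U \<equiv> W * four_block_mat (1\<^sub>m 1) (0\<^sub>m 1 m) (0\<^sub>m m 1) U1"
  shows "U \<in> carrier_mat (Suc m) (Suc m)" and "U\<^sup>T * U = 1\<^sub>m (Suc m)"
    and "A = U * mat_diag (Suc m) ((!) (e # ds)) * U\<^sup>T"
proof -
  define V where "V = four_block_mat (1\<^sub>m 1) (0\<^sub>m 1 m) (0\<^sub>m m 1) U1"
  define D where "D = mat_diag (Suc m) ((!) (e # ds))"
  have V: "V \<in> carrier_mat (Suc m) (Suc m)" unfolding V_def using U1 by auto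
  have D: "D \<in> carrier_mat (Suc m) (Suc m)" unfolding D_def by simp
  have V_transpose: "V\<^sup>T = four_block_mat (1\<^sub>m 1) (0\<^sub>m 1 m) (0\<^sub>m m 1) U1\<^sup>T"
    unfolding V_def using U1 by (subst transpose_four_block_mat) auto
  have V_orth: "V\<^sup>T * V = 1\<^sub>m (Suc m)"
    unfolding V_transpose unfolding V_def using U1 by (subst mult_four_block_mat) auto
  define M1 where "M1 = U1 * mat_diag m ((!) ds)"
  have M1: "M1 \<in> carrier_mat m m" unfolding M1_def using U1 by simp
  have "V * D = four_block_mat (mat 1 1 (\<lambda>_. e)) (0\<^sub>m 1 m) (0\<^sub>m m 1) M1"
    unfolding V_def D_def mat_diag_Cons M1_def using U1
    by (subst mult_four_block_mat) (auto simp: left_mult_zero_mat[OF mat_diag_dim])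
  then have VDV: "V * D * V\<^sup>T = W\<^sup>T * A * W"
    unfolding V_transpose A_block M1_def[symmetric] using U1 M1
    by (simp only:, subst mult_four_block_mat) auto
  show U: "U \<in> carrier_mat (Suc m) (Suc m)" unfolding U_def V_def[symmetric] using W V by simp
  have "U\<^sup>T * U = V\<^sup>T * (W\<^sup>T * W) * V"
    unfolding U_def V_def[symmetric] using W(1) V
    by (simp add: transpose_mult[of _ "Suc m" "Suc m"] assoc_mult_mat[of _ "Suc m" "Suc m" _ "Suc m" _ "Suc m"])
  then show "U\<^sup>T * U = 1\<^sub>m (Suc m)"
    using W V V_orth by simp
  have "U * D * U\<^sup>T = W * (V * D * V\<^sup>T) * W\<^sup>T"
    unfolding U_def V_def[symmetric] using W(1) V D
    by (simp add: transpose_mult[of _ "Suc m" "Suc m"] assoc_mult_mat[of _ "Suc m" "Suc m" _ "Suc m" _ "Suc m"])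
  also have "\<dots> = (W * W\<^sup>T) * A * (W * W\<^sup>T)"
    unfolding VDV using W A by (simp add: assoc_mult_mat[of _ "Suc m" "Suc m" _ "Suc m" _ "Suc m"])
  finally show "A = U * mat_diag (Suc m) ((!) (e # ds)) * U\<^sup>T"
    using orthogonal_mat_mult_transpose[OF W] A unfolding D_def by simp
qed

text \<open>Deflating by the largest eigenvalue at each step yields the eigenvalues already sorted.\<close>
theorem spectral_decomp_exists:
  fixes A :: "real mat"
  assumes "A \<in> carrier_mat n n" and "A\<^sup>T = A"
  shows "\<exists>U ds. spectral_decomp n A U ds"
  using assms
proof (induction n arbitrary: A)
  case 0
  then show ?case
    by (intro exI[of _ "1\<^sub>m 0"] exI[of _ "[]"])
      (auto simp: spectral_decomp_def mat_diag_def intro!: eq_matI)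
next
  case (Suc m)
  note A = Suc.prems
  define e where "e = Max {e. eigenvalue A e}"
  have "{e. eigenvalue A e} \<noteq> {}"
    using symmetric_mat_has_eigenvalue[OF A] by auto
  then have e: "eigenvalue A e" and e_max: "\<And>x. eigenvalue A x \<Longrightarrow> x \<le> e"
    using Max_in Max_ge finite_eigenvalues[OF A(1)] unfolding e_def by auto
  then obtain W where W: "W \<in> carrier_mat (Suc m) (Suc m)" "W\<^sup>T * W = 1\<^sub>m (Suc m)"
    and "A *\<^sub>v col W 0 = e \<cdot>\<^sub>v col W 0"
    using eigenvector_orthonormal_completion[OF A(1)] by blast
  then obtain A1 where A1: "A1 \<in> carrier_mat m m" "A1\<^sup>T = A1"
    and A_block: "W\<^sup>T * A * W = four_block_mat (mat 1 1 (\<lambda>_. e)) (0\<^sub>m 1 m) (0\<^sub>m m 1) A1"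
    using orthogonal_deflation[OF A W] by blast
  obtain U1 ds1 where U1: "U1 \<in> carrier_mat m m" "U1\<^sup>T * U1 = 1\<^sub>m m"
    and ds1: "length ds1 = m" "sorted_wrt (\<ge>) ds1" and A1_eq: "A1 = U1 * mat_diag m ((!) ds1) * U1\<^sup>T"
    using Suc.IH[OF A1] unfolding spectral_decomp_def by blast
  obtain U where U: "U \<in> carrier_mat (Suc m) (Suc m)" "U\<^sup>T * U = 1\<^sub>m (Suc m)"
    and A_eq: "A = U * mat_diag (Suc m) ((!) (e # ds1)) * U\<^sup>T"
    using orthogonal_block_lift[OF A(1) W U1 A_block[unfolded A1_eq]] by blast
  have "d \<le> e" if "d \<in> set ds1" for d
  proof (rule e_max)
    have "poly (char_poly A) d = 0"
      using char_poly_orthogonal_diag[OF U _ A_eq] ds1 that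
      by (simp add: poly_prod_list_zero_iff)
    then show "eigenvalue A d"
      using eigenvalue_root_char_poly[OF A(1)] by simp
  qed
  then have "sorted_wrt (\<ge>) (e # ds1)" using ds1 by simp
  then show ?case
    using U ds1 A_eq unfolding spectral_decomp_def
    by (intro exI[of _ U] exI[of _ "e # ds1"]) auto
qed

lemma spectral_decomp_quadratic_form:
  assumes sd: "spectral_decomp n A U ds" and y: "y \<in> carrier_vec n"
  shows "y \<bullet> (A *\<^sub>v y) = (\<Sum>j<n. ds ! j * ((U\<^sup>T *\<^sub>v y) $ j)\<^sup>2)"
    and "y \<bullet> y = (\<Sum>j<n. ((U\<^sup>T *\<^sub>v y) $ j)\<^sup>2)"
proof -
  from sd have U: "U \<in> carrier_mat n n" "U\<^sup>T * U = 1\<^sub>m n"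
    and A: "A = U * mat_diag n ((!) ds) * U\<^sup>T"
    unfolding spectral_decomp_def by auto
  have U': "U\<^sup>T \<in> carrier_mat n n" "U\<^sup>T\<^sup>T * U\<^sup>T = 1\<^sub>m n"
    using U orthogonal_mat_mult_transpose[OF U] by auto
  define z where "z = U\<^sup>T *\<^sub>v y"
  have z: "z \<in> carrier_vec n" unfolding z_def using U y by simp
  have "y \<bullet> (A *\<^sub>v y) = y \<bullet> (U *\<^sub>v (mat_diag n ((!) ds) *\<^sub>v z))"
    unfolding A z_def using U y by (simp add: assoc_mult_mat_vec[of _ n n _ n])
  also have "\<dots> = z \<bullet> (mat_diag n ((!) ds) *\<^sub>v z)"
    using transpose_vec_mult_scalar[OF U(1) mult_mat_vec_carrier[OF mat_diag_dim z] y]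
    unfolding z_def by simp
  also have "\<dots> = (\<Sum>j<n. ds ! j * (z $ j)\<^sup>2)"
    using z by (simp add: mat_diag_mult_vec scalar_prod_def lessThan_atLeast0 power2_eq_square ac_simps)
  finally show "y \<bullet> (A *\<^sub>v y) = (\<Sum>j<n. ds ! j * ((U\<^sup>T *\<^sub>v y) $ j)\<^sup>2)" unfolding z_def .
  have "y \<bullet> y = z \<bullet> z"
    unfolding z_def using isometry_scalar_prod[OF U' y] by simp
  also have "\<dots> = (\<Sum>j<n. (z $ j)\<^sup>2)"
    using z by (simp add: scalar_prod_def lessThan_atLeast0 power2_eq_square)
  finally show "y \<bullet> y = (\<Sum>j<n. ((U\<^sup>T *\<^sub>v y) $ j)\<^sup>2)" unfolding z_def .
qed

section \<open>The Courant-Fischer comparison\<close>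

text \<open>Pad with zero rows to a singular square matrix and use its kernel.\<close>
lemma wide_mat_has_nonzero_kernel_vec:
  fixes G :: "'a :: field mat"
  assumes G: "G \<in> carrier_mat m i" and mi: "m < i"
  obtains c where "c \<in> carrier_vec i" "c \<noteq> 0\<^sub>v i" "G *\<^sub>v c = 0\<^sub>v m"
proof -
  define G' where "G' = mat i i (\<lambda>(a, b). if a < m then G $$ (a, b) else 0)"
  have G': "G' \<in> carrier_mat i i" unfolding G'_def by simp
  have "G' = mat\<^sub>r i i (\<lambda>a. if a = i - 1 then 0\<^sub>v i else row G' a)"
    using mi by (intro eq_matI) (auto simp: G'_def)
  moreover have "det (mat\<^sub>r i i (\<lambda>a. if a = i - 1 then 0\<^sub>v i else row G' a)) = 0"
    using mi by (intro det_row_0) (auto simp: G'_def)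
  ultimately have "det G' = 0" by simp
  then obtain c where c: "c \<in> carrier_vec i" "c \<noteq> 0\<^sub>v i" and G'c: "G' *\<^sub>v c = 0\<^sub>v i"
    using det_0_iff_vec_prod_zero[OF G'] by blast
  have "G *\<^sub>v c = 0\<^sub>v m"
  proof (rule eq_vecI)
    fix a assume "a < dim_vec (0\<^sub>v m :: 'a vec)"
    then have a: "a < m" by simp
    have "row G' a = row G a"
      using a G mi unfolding G'_def by (intro eq_vecI) auto
    then show "(G *\<^sub>v c) $ a = 0\<^sub>v m $ a"
      using arg_cong[OF G'c, of "\<lambda>v. v $ a"] a G G' mi by simp
  qed (use G in auto)
  then show ?thesis using that c by blast
qed

lemma sorted_desc_nth_mono:
  fixes xs :: "'a :: linorder list"
  assumes "sorted_wrt (\<ge>) xs" and "i \<le> j" and "j < length xs"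
  shows "xs ! j \<le> xs ! i"
  using assms sorted_wrt_nth_less[OF assms(1), of i j] by (cases "i = j") auto

lemma rayleigh_lower_bound_le_eigenvalue:
  assumes sd: "spectral_decomp n A U ds"
    and X: "X \<in> carrier_mat n i" "X\<^sup>T * X = 1\<^sub>m i" and i: "1 \<le> i" "i \<le> n"
    and bound: "\<forall>c \<in> carrier_vec i. t * (c \<bullet> c) \<le> (X *\<^sub>v c) \<bullet> (A *\<^sub>v (X *\<^sub>v c))"
  shows "t \<le> ds ! (i - 1)"
proof -
  from sd have U: "U \<in> carrier_mat n n" and len: "length ds = n" and sorted: "sorted_wrt (\<ge>) ds"
    unfolding spectral_decomp_def by auto
  define G where "G = mat (i - 1) i (\<lambda>(a, b). (U\<^sup>T * X) $$ (a, b))"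
  obtain c where c: "c \<in> carrier_vec i" "c \<noteq> 0\<^sub>v i" and Gc: "G *\<^sub>v c = 0\<^sub>v (i - 1)"
    using wide_mat_has_nonzero_kernel_vec[of G "i - 1" i] i by (auto simp: G_def)
  define y where "y = X *\<^sub>v c"
  have y: "y \<in> carrier_vec n" unfolding y_def using X c by simp
  have z0: "(U\<^sup>T *\<^sub>v y) $ a = 0" if a: "a < i - 1" for a
  proof -
    have "row G a = row (U\<^sup>T * X) a"
      unfolding G_def using a U X i by (intro eq_vecI) auto
    then have "(U\<^sup>T * X *\<^sub>v c) $ a = 0"
      using arg_cong[OF Gc, of "\<lambda>v. v $ a"] a U X i by (simp add: G_def)
    then show ?thesis
      unfolding y_def using U X c by (simp add: assoc_mult_mat_vec[of _ n n _ i])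
  qed
  have "t * (c \<bullet> c) \<le> y \<bullet> (A *\<^sub>v y)" using bound c unfolding y_def by auto
  also have "\<dots> = (\<Sum>j<n. ds ! j * ((U\<^sup>T *\<^sub>v y) $ j)\<^sup>2)"
    by (rule spectral_decomp_quadratic_form(1)[OF sd y])
  also have "\<dots> \<le> (\<Sum>j<n. ds ! (i - 1) * ((U\<^sup>T *\<^sub>v y) $ j)\<^sup>2)"
  proof (rule sum_mono)
    fix j assume "j \<in> {..<n}"
    then have "j < i - 1 \<or> ds ! j \<le> ds ! (i - 1)"
      using sorted_desc_nth_mono[OF sorted, of "i - 1" j] len by (cases "i - 1 \<le> j") auto
    then show "ds ! j * ((U\<^sup>T *\<^sub>v y) $ j)\<^sup>2 \<le> ds ! (i - 1) * ((U\<^sup>T *\<^sub>v y) $ j)\<^sup>2"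
      using z0 by (auto intro: mult_right_mono)
  qed
  also have "\<dots> = ds ! (i - 1) * (c \<bullet> c)"
    using spectral_decomp_quadratic_form(2)[OF sd y] isometry_scalar_prod[OF X c(1)]
    by (simp add: y_def sum_distrib_left)
  finally show ?thesis
    using c conjugate_square_greater_0_vec[of c i] by simp
qed

lemma top_eigenvectors_rayleigh_bound:
  assumes sd: "spectral_decomp n A U ds" and i: "i \<le> n"
  obtains X where "X \<in> carrier_mat n i" "X\<^sup>T * X = 1\<^sub>m i"
    "\<forall>c \<in> carrier_vec i. ds ! (i - 1) * (c \<bullet> c) \<le> (X *\<^sub>v c) \<bullet> (A *\<^sub>v (X *\<^sub>v c))"
proof -
  from sd have U: "U \<in> carrier_mat n n" "U\<^sup>T * U = 1\<^sub>m n" and len: "length ds = n"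
    and sorted: "sorted_wrt (\<ge>) ds" unfolding spectral_decomp_def by auto
  define E where "E = mat n i (\<lambda>(a, b). if a = b then 1 else (0 :: real))"
  have E: "E \<in> carrier_mat n i" unfolding E_def by simp
  have Ec: "(E *\<^sub>v c) $ j = (if j < i then c $ j else 0)" if "c \<in> carrier_vec i" "j < n" for c j
    using that by (auto simp: E_def scalar_prod_def if_distrib[of "\<lambda>x. x * _"] cong: if_cong)
  define X where "X = U * E"
  have X: "X \<in> carrier_mat n i" unfolding X_def using U E by simp
  have "E\<^sup>T * E = 1\<^sub>m i"
    using i by (intro eq_matI) (auto simp: E_def scalar_prod_def if_distrib[of "\<lambda>x. x * _"] cong: if_cong)
  then have X_orth: "X\<^sup>T * X = 1\<^sub>m i"
    unfolding X_def using U E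
    by (simp add: transpose_mult[of _ n n] assoc_mult_mat[of _ i n _ n _ i] flip: assoc_mult_mat[of _ n n _ n _ i])
  have "ds ! (i - 1) * (c \<bullet> c) \<le> (X *\<^sub>v c) \<bullet> (A *\<^sub>v (X *\<^sub>v c))" if c: "c \<in> carrier_vec i" for c
  proof -
    define y where "y = X *\<^sub>v c"
    have y: "y \<in> carrier_vec n" unfolding y_def using X c by simp
    have z: "U\<^sup>T *\<^sub>v y = E *\<^sub>v c"
      unfolding y_def X_def using U E c
      by (simp add: assoc_mult_mat_vec[of _ n n _ i] flip: assoc_mult_mat_vec[of _ n n _ n])
    have "ds ! (i - 1) * (c \<bullet> c) = (\<Sum>j<n. ds ! (i - 1) * ((E *\<^sub>v c) $ j)\<^sup>2)"
      using spectral_decomp_quadratic_form(2)[OF sd y] isometry_scalar_prod[OF X X_orth c]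
      unfolding z y_def[symmetric] by (simp add: sum_distrib_left)
    also have "\<dots> \<le> (\<Sum>j<n. ds ! j * ((E *\<^sub>v c) $ j)\<^sup>2)"
    proof (rule sum_mono)
      fix j assume "j \<in> {..<n}"
      then have "\<not> j < i \<or> ds ! (i - 1) \<le> ds ! j"
        using sorted len i by (cases "j = i - 1") (auto simp: sorted_wrt_iff_nth_less)
      then show "ds ! (i - 1) * ((E *\<^sub>v c) $ j)\<^sup>2 \<le> ds ! j * ((E *\<^sub>v c) $ j)\<^sup>2"
        using Ec[OF c] \<open>j \<in> {..<n}\<close> by (auto intro: mult_right_mono)
    qed
    also have "\<dots> = y \<bullet> (A *\<^sub>v y)"
      unfolding spectral_decomp_quadratic_form(1)[OF sd y] z ..
    finally show ?thesis unfolding y_def .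
  qed
  then show ?thesis using that X X_orth by blast
qed

text \<open>The top i eigenvectors of N, mapped by Q, span an i-dimensional subspace on which the
  Rayleigh quotient of M is at least lambda_i(N).\<close>
lemma eigval_mono_compression:
  fixes M N Q :: "real mat"
  assumes M: "M \<in> carrier_mat n n" "M\<^sup>T = M" and N: "N \<in> carrier_mat k k" "N\<^sup>T = N"
    and Q: "Q \<in> carrier_mat n k" "Q\<^sup>T * Q = 1\<^sub>m k" and "k \<le> n" and i: "1 \<le> i" "i \<le> k"
    and le: "\<forall>x \<in> carrier_vec k. x \<bullet> (N *\<^sub>v x) \<le> (Q *\<^sub>v x) \<bullet> (M *\<^sub>v (Q *\<^sub>v x))"
  shows "eigval N i \<le> eigval M i"
proof -
  obtain U1 ds1 where sd1: "spectral_decomp n M U1 ds1"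
    using spectral_decomp_exists[OF M] by blast
  obtain U2 ds2 where sd2: "spectral_decomp k N U2 ds2"
    using spectral_decomp_exists[OF N] by blast
  obtain X where X: "X \<in> carrier_mat k i" "X\<^sup>T * X = 1\<^sub>m i"
    and bound: "\<forall>c \<in> carrier_vec i. ds2 ! (i - 1) * (c \<bullet> c) \<le> (X *\<^sub>v c) \<bullet> (N *\<^sub>v (X *\<^sub>v c))"
    using top_eigenvectors_rayleigh_bound[OF sd2 i(2)] by blast
  have "\<forall>c \<in> carrier_vec i. ds2 ! (i - 1) * (c \<bullet> c) \<le> (Q * X *\<^sub>v c) \<bullet> (M *\<^sub>v (Q * X *\<^sub>v c))"
    using bound le Q X by (auto intro: order_trans)
  then have "ds2 ! (i - 1) \<le> ds1 ! (i - 1)"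
    using rayleigh_lower_bound_le_eigenvalue[OF sd1 _ isometry_mult[OF Q X]] Q X i \<open>k \<le> n\<close> by simp
  then show ?thesis
    using eigval_spectral_decomp[OF sd1] eigval_spectral_decomp[OF sd2] by simp
qed

section \<open>Positive semidefinite matrices and the pseudoinverse\<close>

lemma spectral_decomp_psd_nonneg:
  assumes sd: "spectral_decomp n A U ds" and psd: "\<forall>x \<in> carrier_vec n. x \<bullet> (A *\<^sub>v x) \<ge> 0"
    and j: "j < n"
  shows "ds ! j \<ge> 0"
proof -
  from sd have U: "U \<in> carrier_mat n n" "U\<^sup>T * U = 1\<^sub>m n" unfolding spectral_decomp_def by auto
  define x where "x = U *\<^sub>v unit_vec n j"
  have x: "x \<in> carrier_vec n" unfolding x_def using U by simp
  have "U\<^sup>T *\<^sub>v x = unit_vec n j"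
    unfolding x_def using U by (simp flip: assoc_mult_mat_vec[of _ n n _ n])
  then have "x \<bullet> (A *\<^sub>v x) = (\<Sum>l<n. ds ! l * (unit_vec n j $ l)\<^sup>2)"
    using spectral_decomp_quadratic_form(1)[OF sd x] by simp
  also have "\<dots> = ds ! j"
    using j by (simp add: unit_vec_def power2_eq_square if_distrib[of "\<lambda>x. _ * x"] cong: if_cong)
  finally show ?thesis using psd x by metis
qed

lemma eigval_square:
  fixes A :: "real mat"
  assumes A: "A \<in> carrier_mat n n" "A\<^sup>T = A" and psd: "\<forall>x \<in> carrier_vec n. x \<bullet> (A *\<^sub>v x) \<ge> 0"
    and i: "1 \<le> i" "i \<le> n"
  shows "eigval (A * A) i = (eigval A i)\<^sup>2" and "eigval A i \<ge> 0"
proof -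
  obtain U ds where sd: "spectral_decomp n A U ds" using spectral_decomp_exists[OF A] by blast
  then have U: "U \<in> carrier_mat n n" "U\<^sup>T * U = 1\<^sub>m n" and len: "length ds = n"
    and sorted: "sorted_wrt (\<ge>) ds" and A_eq: "A = U * mat_diag n ((!) ds) * U\<^sup>T"
    unfolding spectral_decomp_def by auto
  have nonneg: "\<forall>d \<in> set ds. d \<ge> 0"
    using spectral_decomp_psd_nonneg[OF sd psd] len by (auto simp: in_set_conv_nth)
  have "mat_diag n (\<lambda>j. ds ! j * ds ! j) = mat_diag n ((!) (map (\<lambda>d. d\<^sup>2) ds))"
    using len by (auto simp: mat_diag_def power2_eq_square intro!: eq_matI)
  then have "A * A = U * mat_diag n ((!) (map (\<lambda>d. d\<^sup>2) ds)) * U\<^sup>T"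
    unfolding A_eq orthogonal_conj_mult[OF U mat_diag_dim mat_diag_dim] by simp
  moreover have "sorted_wrt (\<ge>) (map (\<lambda>d. d\<^sup>2) ds)"
    unfolding sorted_wrt_map using nonneg by (auto intro: sorted_wrt_mono_rel[OF _ sorted] power_mono)
  ultimately have "spectral_decomp n (A * A) U (map (\<lambda>d. d\<^sup>2) ds)"
    using U len unfolding spectral_decomp_def by simp
  then show "eigval (A * A) i = (eigval A i)\<^sup>2"
    using eigval_spectral_decomp[OF sd] eigval_spectral_decomp len i by simp
  show "eigval A i \<ge> 0"
    using eigval_spectral_decomp[OF sd] spectral_decomp_psd_nonneg[OF sd psd, of "i - 1"] i by simp
qed

lemma psd_quadratic_form_zero:
  fixes A :: "real mat"
  assumes A: "A \<in> carrier_mat n n" "A\<^sup>T = A" and psd: "\<forall>x \<in> carrier_vec n. x \<bullet> (A *\<^sub>v x) \<ge> 0"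
    and x: "x \<in> carrier_vec n" and x0: "x \<bullet> (A *\<^sub>v x) = 0"
  shows "A *\<^sub>v x = 0\<^sub>v n"
proof -
  obtain U ds where sd: "spectral_decomp n A U ds" using spectral_decomp_exists[OF A] by blast
  then have U: "U \<in> carrier_mat n n" and len: "length ds = n"
    and A_eq: "A = U * mat_diag n ((!) ds) * U\<^sup>T" unfolding spectral_decomp_def by auto
  define z where "z = U\<^sup>T *\<^sub>v x"
  have z: "z \<in> carrier_vec n" unfolding z_def using U x by simp
  have "(\<Sum>j<n. ds ! j * (z $ j)\<^sup>2) = 0"
    using spectral_decomp_quadratic_form(1)[OF sd x] x0 unfolding z_def by simp
  then have "\<forall>j \<in> {..<n}. ds ! j * (z $ j)\<^sup>2 = 0"
    using spectral_decomp_psd_nonneg[OF sd psd] by (subst (asm) sum_nonneg_eq_0_iff) auto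
  then have "mat_diag n ((!) ds) *\<^sub>v z = 0\<^sub>v n"
    using z by (auto simp: mat_diag_mult_vec power2_eq_square)
  moreover have "A *\<^sub>v x = U *\<^sub>v (mat_diag n ((!) ds) *\<^sub>v z)"
    unfolding A_eq z_def using U x by (simp add: assoc_mult_mat_vec[of _ n n _ n])
  ultimately show ?thesis using U by auto
qed

lemma penrose_conditions_unique:
  fixes M X Y :: "'a :: comm_semiring_0 mat"
  assumes M: "M \<in> carrier_mat m n" and X: "X \<in> carrier_mat n m" and Y: "Y \<in> carrier_mat n m"
    and x1: "M * X * M = M" and x2: "X * M * X = X" and x3: "(M * X)\<^sup>T = M * X" and x4: "(X * M)\<^sup>T = X * M"
    and y1: "M * Y * M = M" and y2: "Y * M * Y = Y" and y3: "(M * Y)\<^sup>T = M * Y" and y4: "(Y * M)\<^sup>T = Y * M"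
  shows "X = Y"
proof -
  have MX: "(M * X)\<^sup>T = X\<^sup>T * M\<^sup>T" and MY: "(M * Y)\<^sup>T = Y\<^sup>T * M\<^sup>T"
    and XM: "(X * M)\<^sup>T = M\<^sup>T * X\<^sup>T" and YM: "(Y * M)\<^sup>T = M\<^sup>T * Y\<^sup>T"
    using transpose_mult M X Y by blast+
  have Mt_Y: "M\<^sup>T = M\<^sup>T * Y\<^sup>T * M\<^sup>T" and Mt_X: "M\<^sup>T = M\<^sup>T * X\<^sup>T * M\<^sup>T"
    by (metis y1 transpose_mult3[OF M Y M], metis x1 transpose_mult3[OF M X M])
  have "X = X * (M * X)" using x2 M X by simp
  also have "\<dots> = X * (X\<^sup>T * M\<^sup>T)" by (simp only: MX[unfolded x3])
  also have "\<dots> = X * (X\<^sup>T * (M\<^sup>T * Y\<^sup>T * M\<^sup>T))" by (simp only: Mt_Y[symmetric])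
  also have "\<dots> = X * ((M * X)\<^sup>T * (M * Y)\<^sup>T)"
    unfolding MX MY using M X Y assoc_mult_mat[of "X\<^sup>T" m n "M\<^sup>T" m "Y\<^sup>T * M\<^sup>T" m] by simp
  also have "\<dots> = (X * M * X) * (M * Y)"
    unfolding x3 y3 using M X Y by (simp add: assoc_mult_mat[of X n m "M * X" m "M * Y" m])
  also have "\<dots> = X * M * Y"
    unfolding x2 using M X Y by simp
  finally have X_eq: "X = X * M * Y" .
  have "Y = (Y * M) * Y" using y2 by simp
  also have "\<dots> = (M\<^sup>T * Y\<^sup>T) * Y" by (simp only: YM[unfolded y4])
  also have "\<dots> = ((M\<^sup>T * X\<^sup>T * M\<^sup>T) * Y\<^sup>T) * Y" by (simp only: Mt_X[symmetric])
  also have "\<dots> = ((X * M)\<^sup>T * (Y * M)\<^sup>T) * Y"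
    unfolding XM YM using M X Y
    by (subst assoc_mult_mat[of "M\<^sup>T * X\<^sup>T" n n "M\<^sup>T" m "Y\<^sup>T" n]) auto
  also have "\<dots> = X * M * (Y * M * Y)"
    unfolding x4 y4 using M X Y by (intro assoc_mult_mat[of "X * M" n n "Y * M" n Y m]) auto
  also have "\<dots> = X * M * Y"
    unfolding y2 ..
  finally show ?thesis using X_eq by simp
qed

text \<open>Inverting the eigenvalues with the field convention inverse 0 = 0 gives the
  pseudoinverse of a symmetric matrix.\<close>
lemma pinv_symmetric:
  fixes B :: "real mat"
  assumes B: "B \<in> carrier_mat k k" "B\<^sup>T = B"
  shows "pinv B \<in> carrier_mat k k" and "(pinv B)\<^sup>T = pinv B"
    and "B * pinv B * B = B" and "pinv B * B * pinv B = pinv B"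
proof -
  obtain U ds where "spectral_decomp k B U ds" using spectral_decomp_exists[OF B] by blast
  then have U: "U \<in> carrier_mat k k" "U\<^sup>T * U = 1\<^sub>m k" and B_eq: "B = U * mat_diag k ((!) ds) * U\<^sup>T"
    unfolding spectral_decomp_def by auto
  define X where "X = U * mat_diag k (\<lambda>j. inverse (ds ! j)) * U\<^sup>T"
  have X: "X \<in> carrier_mat k k" "X\<^sup>T = X"
    unfolding X_def using U orthogonal_diag_symmetric by auto
  have BX: "B * X = U * mat_diag k (\<lambda>j. ds ! j * inverse (ds ! j)) * U\<^sup>T"
    and XB: "X * B = U * mat_diag k (\<lambda>j. inverse (ds ! j) * ds ! j) * U\<^sup>T"
    unfolding B_eq X_def orthogonal_conj_mult[OF U mat_diag_dim mat_diag_dim] by simp_all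
  have inverse_cancel: "d * inverse d * d = d" "inverse d * d * inverse d = inverse d" for d :: real
    by (cases "d = 0"; simp)+
  have "B * X * B = B" and "X * B * X = X"
    unfolding BX XB unfolding B_eq X_def orthogonal_conj_mult[OF U mat_diag_dim mat_diag_dim]
    by (simp_all add: inverse_cancel)
  moreover have "(B * X)\<^sup>T = B * X" and "(X * B)\<^sup>T = X * B"
    unfolding BX XB using U orthogonal_diag_symmetric by auto
  ultimately have penrose: "X \<in> carrier_mat (dim_col B) (dim_row B) \<and> B * X * B = B \<and>
      X * B * X = X \<and> (B * X)\<^sup>T = B * X \<and> (X * B)\<^sup>T = X * B"
    using X B by simp
  have "pinv B = X"
    unfolding pinv_def
  proof (rule the_equality)
    fix Y assume "Y \<in> carrier_mat (dim_col B) (dim_row B) \<and> B * Y * B = B \<and> Y * B * Y = Y \<and>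
      (B * Y)\<^sup>T = B * Y \<and> (Y * B)\<^sup>T = Y * B"
    then show "Y = X"
      using penrose_conditions_unique[of B k k Y X] penrose B by simp
  qed (fact penrose)
  then show "pinv B \<in> carrier_mat k k" "(pinv B)\<^sup>T = pinv B"
    and "B * pinv B * B = B" "pinv B * B * pinv B = pinv B"
    using X penrose B by auto
qed

lemma pinv_psd:
  fixes B :: "real mat"
  assumes B: "B \<in> carrier_mat k k" "B\<^sup>T = B" and psd: "\<forall>x \<in> carrier_vec k. x \<bullet> (B *\<^sub>v x) \<ge> 0"
    and z: "z \<in> carrier_vec k"
  shows "z \<bullet> (pinv B *\<^sub>v z) = (pinv B *\<^sub>v z) \<bullet> (B *\<^sub>v (pinv B *\<^sub>v z))"
    and "z \<bullet> (pinv B *\<^sub>v z) \<ge> 0"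
proof -
  note P = pinv_symmetric[OF B]
  have Pz: "pinv B *\<^sub>v z \<in> carrier_vec k" using P(1) z by simp
  have "z \<bullet> (pinv B *\<^sub>v z) = z \<bullet> (pinv B *\<^sub>v (B *\<^sub>v (pinv B *\<^sub>v z)))"
    by (metis P(4) assoc_mult3_mat_vec[OF P(1) B(1) P(1) z])
  also have "\<dots> = (B *\<^sub>v (pinv B *\<^sub>v z)) \<bullet> (pinv B *\<^sub>v z)"
    using symmetric_bilinear_form_commute[OF P(1,2) z] B Pz by simp
  also have "\<dots> = (pinv B *\<^sub>v z) \<bullet> (B *\<^sub>v (pinv B *\<^sub>v z))"
    using B Pz by (simp add: comm_scalar_prod[of _ k])
  finally show "z \<bullet> (pinv B *\<^sub>v z) = (pinv B *\<^sub>v z) \<bullet> (B *\<^sub>v (pinv B *\<^sub>v z))" .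
  then show "z \<bullet> (pinv B *\<^sub>v z) \<ge> 0" using psd Pz by simp
qed

section \<open>The Nystrom approximation\<close>

locale nystrom_setting =
  fixes A Q :: "real mat" and n k :: nat
  assumes A: "A \<in> carrier_mat n n" "A\<^sup>T = A" and A_psd: "\<forall>x \<in> carrier_vec n. x \<bullet> (A *\<^sub>v x) \<ge> 0"
    and Q: "Q \<in> carrier_mat n k" "Q\<^sup>T * Q = 1\<^sub>m k"
begin

definition core :: "real mat" where "core = Q\<^sup>T * A * Q"

definition sketch :: "real mat" where "sketch = A * Q"

lemma core_mat: "core \<in> carrier_mat k k" "core\<^sup>T = core"
  unfolding core_def using A Q symmetric_congruence[OF A Q(1)] by auto

lemma sketch_mat: "sketch \<in> carrier_mat n k" "sketch\<^sup>T \<in> carrier_mat k n"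
  unfolding sketch_def using A Q by auto

lemma pinv_core: "pinv core \<in> carrier_mat k k" "(pinv core)\<^sup>T = pinv core"
  "core * pinv core * core = core"
  using pinv_symmetric[OF core_mat] by auto

lemma nystrom_eq: "nystrom A Q = sketch * pinv core * sketch\<^sup>T"
  unfolding nystrom_def core_def sketch_def ..

lemma core_quadratic_form:
  assumes x: "x \<in> carrier_vec k"
  shows "x \<bullet> (core *\<^sub>v x) = (Q *\<^sub>v x) \<bullet> (A *\<^sub>v (Q *\<^sub>v x))"
  using assoc_mult3_mat_vec[of "Q\<^sup>T" k n A n Q k x] transpose_mult_vec_scalar[OF Q(1) x] A Q x
  unfolding core_def by simp

lemma core_psd: "\<forall>x \<in> carrier_vec k. x \<bullet> (core *\<^sub>v x) \<ge> 0"
  using core_quadratic_form A_psd Q by simp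

lemma core_mult_vec: "core *\<^sub>v x = Q\<^sup>T *\<^sub>v (sketch *\<^sub>v x)" if "x \<in> carrier_vec k"
  unfolding core_def sketch_def using assoc_mult3_mat_vec[of "Q\<^sup>T" k n A n Q k x] A Q that by simp

lemma sketch_transpose_mult_vec: "sketch\<^sup>T *\<^sub>v y = Q\<^sup>T *\<^sub>v (A *\<^sub>v y)" if "y \<in> carrier_vec n"
  unfolding sketch_def using transpose_mult[OF A(1) Q(1)] A Q that by simp

lemma nystrom_carrier: "nystrom A Q \<in> carrier_mat n n"
  unfolding nystrom_eq using sketch_mat pinv_core by simp

lemma nystrom_symmetric: "(nystrom A Q)\<^sup>T = nystrom A Q"
  unfolding nystrom_eq using symmetric_congruence[OF pinv_core(1,2) sketch_mat(2)] by simp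

lemma nystrom_quadratic_form:
  assumes y: "y \<in> carrier_vec n"
  shows "y \<bullet> (nystrom A Q *\<^sub>v y) = (sketch\<^sup>T *\<^sub>v y) \<bullet> (pinv core *\<^sub>v (sketch\<^sup>T *\<^sub>v y))"
  unfolding nystrom_eq assoc_mult3_mat_vec[OF sketch_mat(1) pinv_core(1) sketch_mat(2) y]
  using transpose_vec_mult_scalar[OF sketch_mat(1) _ y, of "pinv core *\<^sub>v (sketch\<^sup>T *\<^sub>v y)"]
    sketch_mat pinv_core y by simp

lemma nystrom_psd: "\<forall>y \<in> carrier_vec n. y \<bullet> (nystrom A Q *\<^sub>v y) \<ge> 0"
  using nystrom_quadratic_form pinv_psd(2)[OF core_mat core_psd] sketch_mat by simp

text \<open>With u = Q P S^T y, where S is the sketch AQ and P the pseudoinverse of the core, both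
  u \<bullet> A y and u \<bullet> A u equal y \<bullet> N y; hence 0 \<le> (y - u) \<bullet> A (y - u) = y \<bullet> A y - y \<bullet> N y.\<close>
lemma nystrom_le:
  assumes y: "y \<in> carrier_vec n"
  shows "y \<bullet> (nystrom A Q *\<^sub>v y) \<le> y \<bullet> (A *\<^sub>v y)"
proof -
  define z where "z = sketch\<^sup>T *\<^sub>v y"
  define w where "w = pinv core *\<^sub>v z"
  define u where "u = Q *\<^sub>v w"
  have z: "z \<in> carrier_vec k" unfolding z_def using sketch_mat y by simp
  have w: "w \<in> carrier_vec k" unfolding w_def using pinv_core z by simp
  have u: "u \<in> carrier_vec n" unfolding u_def using Q w by simp
  have "u \<bullet> (A *\<^sub>v y) = w \<bullet> z"
    unfolding u_def z_def sketch_transpose_mult_vec[OF y]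
    using transpose_mult_vec_scalar[OF Q(1) w, of "A *\<^sub>v y"] A y by simp
  then have uAy: "u \<bullet> (A *\<^sub>v y) = z \<bullet> (pinv core *\<^sub>v z)"
    unfolding w_def using comm_scalar_prod[OF mult_mat_vec_carrier[OF pinv_core(1) z] z] by simp
  have uAu: "u \<bullet> (A *\<^sub>v u) = z \<bullet> (pinv core *\<^sub>v z)"
    using core_quadratic_form[OF w] pinv_psd(1)[OF core_mat core_psd z]
    unfolding u_def w_def by simp
  have yAu: "y \<bullet> (A *\<^sub>v u) = u \<bullet> (A *\<^sub>v y)"
    by (rule symmetric_bilinear_form_commute[OF A y u])
  have "0 \<le> (y - u) \<bullet> (A *\<^sub>v (y - u))" using A_psd y u by simp
  also have "\<dots> = y \<bullet> (A *\<^sub>v y) - y \<bullet> (A *\<^sub>v u) - (u \<bullet> (A *\<^sub>v y) - u \<bullet> (A *\<^sub>v u))"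
    using A y u by (simp add: mult_minus_distrib_mat_vec minus_scalar_prod_distrib[of _ n]
        scalar_prod_minus_distrib[of _ n])
  also have "\<dots> = y \<bullet> (A *\<^sub>v y) - y \<bullet> (nystrom A Q *\<^sub>v y)"
    unfolding yAu uAy uAu nystrom_quadratic_form[OF y] z_def by simp
  finally show ?thesis by simp
qed

text \<open>The pseudoinverse is only a generalized inverse of the core, so this uses positive
  semidefiniteness: AQ annihilates every t with core t = 0, since (Qt) \<bullet> A (Qt) = t \<bullet> core t = 0.\<close>
lemma nystrom_mult_isometry:
  assumes x: "x \<in> carrier_vec k"
  shows "nystrom A Q *\<^sub>v (Q *\<^sub>v x) = sketch *\<^sub>v x"
proof -
  define x' where "x' = pinv core *\<^sub>v (core *\<^sub>v x)"
  have x': "x' \<in> carrier_vec k" unfolding x'_def using pinv_core core_mat x by simp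
  have "core *\<^sub>v x' = core *\<^sub>v x"
    unfolding x'_def
    by (metis pinv_core(3) assoc_mult3_mat_vec[OF core_mat(1) pinv_core(1) core_mat(1) x])
  then have "core *\<^sub>v (x - x') = 0\<^sub>v k"
    using core_mat x x' by (simp add: mult_minus_distrib_mat_vec)
  then have "(Q *\<^sub>v (x - x')) \<bullet> (A *\<^sub>v (Q *\<^sub>v (x - x'))) = 0"
    using core_quadratic_form[of "x - x'"] x x' by simp
  then have "A *\<^sub>v (Q *\<^sub>v (x - x')) = 0\<^sub>v n"
    using psd_quadratic_form_zero[OF A A_psd] Q x x' by simp
  then have "sketch *\<^sub>v (x - x') = 0\<^sub>v n"
    unfolding sketch_def using A Q x x' by simp
  then have "sketch *\<^sub>v x - sketch *\<^sub>v x' = 0\<^sub>v n"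
    using sketch_mat x x' by (simp add: mult_minus_distrib_mat_vec)
  then have sketch_x: "sketch *\<^sub>v x' = sketch *\<^sub>v x"
    using sketch_mat x x' minus_vec_eq_zeroD[of "sketch *\<^sub>v x" n "sketch *\<^sub>v x'"] by simp
  have "sketch\<^sup>T *\<^sub>v (Q *\<^sub>v x) = core *\<^sub>v x"
    using sketch_transpose_mult_vec core_mult_vec x A Q unfolding sketch_def by simp
  then have "nystrom A Q *\<^sub>v (Q *\<^sub>v x) = sketch *\<^sub>v x'"
    unfolding nystrom_eq x'_def using assoc_mult3_mat_vec[OF sketch_mat(1) pinv_core(1) sketch_mat(2)] Q x
    by simp
  with sketch_x show ?thesis by simp
qed

lemma eigval_nystrom_le:
  assumes "1 \<le> i" "i \<le> n"
  shows "eigval (nystrom A Q) i \<le> eigval A i"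
  using eigval_mono_compression[OF A nystrom_carrier nystrom_symmetric, of "1\<^sub>m n"] nystrom_le assms
  by simp

lemma singval_sketch_le_eigval_nystrom:
  assumes i: "1 \<le> i" "i \<le> k" and "k \<le> n"
  shows "singval sketch i \<le> eigval (nystrom A Q) i"
proof -
  note N = nystrom_carrier nystrom_symmetric
  have N2: "nystrom A Q * nystrom A Q \<in> carrier_mat n n"
    "(nystrom A Q * nystrom A Q)\<^sup>T = nystrom A Q * nystrom A Q"
    using N gram_symmetric[OF N(1)] by auto
  have gram: "sketch\<^sup>T * sketch \<in> carrier_mat k k" "(sketch\<^sup>T * sketch)\<^sup>T = sketch\<^sup>T * sketch"
    using sketch_mat gram_symmetric[OF sketch_mat(1)] by auto
  have "eigval (sketch\<^sup>T * sketch) i \<le> eigval (nystrom A Q * nystrom A Q) i" (is "?G \<le> _")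
  proof (rule eigval_mono_compression[OF N2 gram Q \<open>k \<le> n\<close> i])
    show "\<forall>x \<in> carrier_vec k. x \<bullet> ((sketch\<^sup>T * sketch) *\<^sub>v x) \<le>
        (Q *\<^sub>v x) \<bullet> ((nystrom A Q * nystrom A Q) *\<^sub>v (Q *\<^sub>v x))"
    proof
      fix x :: "real vec" assume x: "x \<in> carrier_vec k"
      have "(Q *\<^sub>v x) \<bullet> ((nystrom A Q * nystrom A Q) *\<^sub>v (Q *\<^sub>v x)) =
          (nystrom A Q *\<^sub>v (Q *\<^sub>v x)) \<bullet> (nystrom A Q *\<^sub>v (Q *\<^sub>v x))"
        using gram_quadratic_form[OF N(1), of "Q *\<^sub>v x"] N Q x by simp
      then show "x \<bullet> ((sketch\<^sup>T * sketch) *\<^sub>v x) \<le>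
          (Q *\<^sub>v x) \<bullet> ((nystrom A Q * nystrom A Q) *\<^sub>v (Q *\<^sub>v x))"
        unfolding gram_quadratic_form[OF sketch_mat(1) x] nystrom_mult_isometry[OF x] by simp
    qed
  qed
  also have "\<dots> = (eigval (nystrom A Q) i)\<^sup>2"
    using eigval_square(1)[OF N nystrom_psd] i \<open>k \<le> n\<close> by simp
  finally have "sqrt ?G \<le> sqrt ((eigval (nystrom A Q) i)\<^sup>2)"
    by (rule real_sqrt_le_mono)
  also have "\<dots> = eigval (nystrom A Q) i"
    using eigval_square(2)[OF N nystrom_psd] i \<open>k \<le> n\<close> by simp
  finally show ?thesis
    unfolding singval_def .
qed

lemma eigval_core_le_singval_sketch:
  assumes i: "1 \<le> i" "i \<le> k"
  shows "eigval core i \<le> singval sketch i"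
proof -
  have core2: "core * core \<in> carrier_mat k k" "(core * core)\<^sup>T = core * core"
    using core_mat gram_symmetric[OF core_mat(1)] by auto
  have gram: "sketch\<^sup>T * sketch \<in> carrier_mat k k" "(sketch\<^sup>T * sketch)\<^sup>T = sketch\<^sup>T * sketch"
    using sketch_mat gram_symmetric[OF sketch_mat(1)] by auto
  have "eigval (core * core) i \<le> eigval (sketch\<^sup>T * sketch) i"
  proof (rule eigval_mono_compression[OF gram core2 one_carrier_mat _ order_refl i])
    show "\<forall>x \<in> carrier_vec k. x \<bullet> ((core * core) *\<^sub>v x) \<le>
        (1\<^sub>m k *\<^sub>v x) \<bullet> ((sketch\<^sup>T * sketch) *\<^sub>v (1\<^sub>m k *\<^sub>v x))"
    proof
      fix x :: "real vec" assume x: "x \<in> carrier_vec k"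
      have "x \<bullet> ((core * core) *\<^sub>v x) = (Q\<^sup>T *\<^sub>v (sketch *\<^sub>v x)) \<bullet> (Q\<^sup>T *\<^sub>v (sketch *\<^sub>v x))"
        using gram_quadratic_form[OF core_mat(1) x] core_mat(2) core_mult_vec[OF x] by simp
      also have "\<dots> \<le> (sketch *\<^sub>v x) \<bullet> (sketch *\<^sub>v x)"
        using isometry_transpose_norm_le[OF Q] sketch_mat x by simp
      also have "\<dots> = (1\<^sub>m k *\<^sub>v x) \<bullet> ((sketch\<^sup>T * sketch) *\<^sub>v (1\<^sub>m k *\<^sub>v x))"
        using gram_quadratic_form[OF sketch_mat(1) x] x by simp
      finally show "x \<bullet> ((core * core) *\<^sub>v x) \<le>
          (1\<^sub>m k *\<^sub>v x) \<bullet> ((sketch\<^sup>T * sketch) *\<^sub>v (1\<^sub>m k *\<^sub>v x))" .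
    qed
  qed simp
  also have "eigval (core * core) i = (eigval core i)\<^sup>2"
    using eigval_square(1)[OF core_mat core_psd] i by simp
  finally show ?thesis
    unfolding singval_def by (rule real_le_rsqrt)
qed

end

theorem theorem3p1:
  fixes A Q :: "real mat" and n k i :: nat
  assumes A_dim: "A \<in> carrier_mat n n"
    and A_sym: "A\<^sup>T = A"
    and A_psd: "\<forall>x \<in> carrier_vec n. x \<bullet> (A *\<^sub>v x) \<ge> 0"
    and Q_dim: "Q \<in> carrier_mat n k"
    and Q_orth: "Q\<^sup>T * Q = 1\<^sub>m k"
    and k_le_n: "k \<le> n"
    and i_ge: "1 \<le> i" and i_le: "i \<le> k"
  shows "eigval A i \<ge> eigval (nystrom A Q) i
       \<and> eigval (nystrom A Q) i \<ge> singval (A * Q) i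
       \<and> singval (A * Q) i \<ge> eigval (Q\<^sup>T * A * Q) i"
proof -
  interpret nystrom_setting A Q n k
    using assms by unfold_locales auto
  have "i \<le> n" using i_le k_le_n by simp
  then show ?thesis
    using eigval_nystrom_le[OF i_ge] singval_sketch_le_eigval_nystrom[OF i_ge i_le k_le_n]
      eigval_core_le_singval_sketch[OF i_ge i_le]
    unfolding sketch_def core_def by (intro conjI)
qed

end
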